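(* Let $k\geqslant 1$ and let $\pi_1, \ldots, \pi_k \geqslant 3$ be pairwise relatively prime integers, with $\pi_1=3$. Then the NFA $A_{\pi_1, \ldots, \pi_k}$ and the regular expression $\alpha_{\pi_1, \ldots, \pi_k}$ define the same language.
   Context: Over the alphabet $\{a,b\}$, for an integer $\pi\geqslant 3$ let $\beta_\pi=(a((b\mid\epsilon)a)^{\pi-2}a)^*$, where $(b\mid\epsilon)$ denotes the language $\{b,\epsilon\}$ and $x^{m}$ denotes $m$-fold concatenation; and let $\alpha_{\pi_1,\ldots,\pi_k}=\big(a(\beta_{\pi_1}\mid\cdots\mid\beta_{\pi_k})b\big)^*$. The NFA $A_{\pi_1,\ldots,\pi_k}=(\{a,b\},Q,\{\widehat q\},\delta,\{\widehat q\})$ has states $Q=\{\widehat{q}\} \cup \bigcup_{i=1}^k \{q_{i,0}, \ldots, q_{i,\pi_i-1}\} \cup \bigcup_{i=1}^k \{r_{i,1}, \ldots, r_{i,\pi_i-2}\}$, unique initial state $\widehat q$, unique accepting state $\widehat q$, and exactly the following transitions: $\delta(\widehat{q}, a) = \{q_{1,0}, \ldots, q_{k,0}\}$; $\delta(q_{i,j},a) = \{q_{i,(j+1) \bmod \pi_i}\}$ for all $i$ and $0\leqslant j\leqslant \pi_i-1$; $\delta(q_{i,j},b) = \{r_{i,j}\}$ and $\delta(r_{i,j},a)=\{q_{i,j+1}\}$ for $1 \leqslant j \leqslant \pi_i-2$; $\delta(q_{i,0},b) = \{\widehat{q}\}$; all other transitions are empty. *)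

theory Defs
  imports Main
begin

datatype sym = a | b

type_synonym lang = "sym list set"

definition conc :: "lang \<Rightarrow> lang \<Rightarrow> lang" (infixr "@@" 75) where
  "L @@ M = {u @ v | u v. u \<in> L \<and> v \<in> M}"

primrec lpow :: "lang \<Rightarrow> nat \<Rightarrow> lang" where
  "lpow L 0 = {[]}"
| "lpow L (Suc n) = L @@ lpow L n"

definition lstar :: "lang \<Rightarrow> lang" where
  "lstar L = (\<Union>n. lpow L n)"

definition beta :: "nat \<Rightarrow> lang" where
  "beta p = lstar ({[a]} @@ lpow ({[b], []} @@ {[a]}) (p - 2) @@ {[a]})"

(* alpha_{pi_1..pi_k} = (a (beta_pi_1 | ... | beta_pi_k) b)^*;
   the parameters are given as a list ps = [pi_1, ..., pi_k], indices 0..k-1 *)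
definition alpha :: "nat list \<Rightarrow> lang" where
  "alpha ps = lstar ({[a]} @@ (\<Union>i<length ps. beta (ps ! i)) @@ {[b]})"

datatype state = Qhat | Q nat nat | R nat nat

definition delta :: "nat list \<Rightarrow> state \<Rightarrow> sym \<Rightarrow> state \<Rightarrow> bool" where
  "delta ps q c q' \<longleftrightarrow>
     (q = Qhat \<and> c = a \<and> (\<exists>i<length ps. q' = Q i 0))
   \<or> (\<exists>i<length ps. \<exists>j<ps ! i. q = Q i j \<and> c = a \<and> q' = Q i (Suc j mod (ps ! i)))
   \<or> (\<exists>i<length ps. \<exists>j. 1 \<le> j \<and> j \<le> ps ! i - 2 \<and> q = Q i j \<and> c = b \<and> q' = R i j)
   \<or> (\<exists>i<length ps. \<exists>j. 1 \<le> j \<and> j \<le> ps ! i - 2 \<and> q = R i j \<and> c = a \<and> q' = Q i (Suc j))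
   \<or> (\<exists>i<length ps. q = Q i 0 \<and> c = b \<and> q' = Qhat)"

inductive run :: "nat list \<Rightarrow> state \<Rightarrow> sym list \<Rightarrow> state \<Rightarrow> bool" for ps where
  run_nil: "run ps q [] q"
| run_cons: "delta ps q c q' \<Longrightarrow> run ps q' w q'' \<Longrightarrow> run ps q (c # w) q''"

definition nfa_lang :: "nat list \<Rightarrow> lang" where
  "nfa_lang ps = {w. run ps Qhat w Qhat}"

end

theory Submission
  imports Defs
begin

text \<open>
  An accepting run of the automaton is a sequence of excursions from \<open>Qhat\<close>: it enters cycle \<open>i\<close>
  by \<open>a\<close>, goes round the cycle any number of times and leaves by \<open>b\<close>. One round from \<open>q\<^sub>i\<^sub>,\<^sub>0\<close>
  reads \<open>a\<close>, then \<open>\<pi>\<^sub>i - 2\<close> times either \<open>a\<close> or the detour \<open>ba\<close> through an \<open>r\<close>-state, and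
  finally \<open>a\<close>: exactly a block of \<open>\<beta>\<^sub>\<pi>\<^sub>i\<close>. Hence every word of \<open>\<alpha>\<close> has an accepting run.
  Conversely, the words leading from each state to \<open>Qhat\<close> are described by explicit expressions
  built from \<open>\<alpha>\<close> and \<open>\<beta>\<^sub>\<pi>\<^sub>i\<close>; these are closed under prepending a transition, so every
  accepted word lies in \<open>\<alpha>\<close>.
\<close>

lemma conc_iff: "w \<in> L @@ M \<longleftrightarrow> (\<exists>u v. w = u @ v \<and> u \<in> L \<and> v \<in> M)"
  by (auto simp: conc_def)

lemma concI: "u \<in> L \<Longrightarrow> v \<in> M \<Longrightarrow> u @ v \<in> L @@ M"
  by (auto simp: conc_def)

lemma conc_assoc: "(L @@ M) @@ N = L @@ (M @@ N)"
  unfolding conc_def by (blast intro: append_assoc[symmetric] append_assoc)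

lemma singleton_conc: "{[c]} @@ M = (#) c ` M"
  by (auto simp: conc_def)

lemma Nil_conc: "{[]} @@ M = M"
  by (auto simp: conc_def)

lemma lstar_Nil: "[] \<in> lstar L"
  unfolding lstar_def by (auto intro: exI[of _ 0])

lemma lstar_append:
  assumes "u \<in> L" "v \<in> lstar L"
  shows "u @ v \<in> lstar L"
proof -
  obtain n where "v \<in> lpow L n"
    using assms(2) by (auto simp: lstar_def)
  then have "u @ v \<in> lpow L (Suc n)"
    using assms(1) by (simp add: concI)
  then show ?thesis
    unfolding lstar_def by blast
qed

lemma lstar_subset_closed:
  assumes "[] \<in> S" and "\<And>u v. u \<in> L \<Longrightarrow> v \<in> S \<Longrightarrow> u @ v \<in> S"
  shows "lstar L \<subseteq> S"
proof -
  have "lpow L n \<subseteq> S" for n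
  proof (induction n)
    case (Suc n)
    then show ?case
      using assms(2) by (fastforce simp: conc_iff)
  qed (simp add: assms(1))
  then show ?thesis
    unfolding lstar_def by blast
qed

lemma opt_b_conc_a: "{[b], []} @@ {[a]} = {[b, a], [a]}"
  by (auto simp: conc_def)

lemma beta_def': "beta p = lstar ({[a]} @@ lpow {[b, a], [a]} (p - 2) @@ {[a]})"
  by (simp add: beta_def opt_b_conc_a)

lemma run_append: "run ps q u q' \<Longrightarrow> run ps q' v q'' \<Longrightarrow> run ps q (u @ v) q''"
  by (induction rule: run.induct) (auto intro: run.intros)

lemma run_single: "delta ps q c q' \<Longrightarrow> run ps q [c] q'"
  by (auto intro: run.intros)

lemma lstar_run_loop:
  assumes "w \<in> lstar L" and "\<And>u. u \<in> L \<Longrightarrow> run ps q u q"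
  shows "run ps q w q"
  using lstar_subset_closed[of "{w. run ps q w q}" L] assms
  by (auto intro: run.intros run_append)

lemma delta_Qhat_Q: "i < length ps \<Longrightarrow> delta ps Qhat a (Q i 0)"
  by (auto simp: delta_def)

lemma delta_Q_Qhat: "i < length ps \<Longrightarrow> delta ps (Q i 0) b Qhat"
  by (auto simp: delta_def)

lemma delta_Q_Q_Suc: "i < length ps \<Longrightarrow> Suc j < ps ! i \<Longrightarrow> delta ps (Q i j) a (Q i (Suc j))"
  unfolding delta_def by (intro disjI2 disjI1) auto

lemma delta_Q_Q_0: "i < length ps \<Longrightarrow> ps ! i = Suc j \<Longrightarrow> delta ps (Q i j) a (Q i 0)"
  unfolding delta_def by (intro disjI2 disjI1) auto

lemma delta_Q_R: "i < length ps \<Longrightarrow> 1 \<le> j \<Longrightarrow> Suc j < ps ! i \<Longrightarrow> delta ps (Q i j) b (R i j)"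
  unfolding delta_def by (intro disjI2 disjI1) auto

lemma delta_R_Q: "i < length ps \<Longrightarrow> 1 \<le> j \<Longrightarrow> Suc j < ps ! i \<Longrightarrow> delta ps (R i j) a (Q i (Suc j))"
  unfolding delta_def by (intro disjI2 disjI1) auto

lemma run_cycle_step:
  assumes "i < length ps" "1 \<le> j" "Suc j < ps ! i" "x \<in> {[b, a], [a]}"
  shows "run ps (Q i j) x (Q i (Suc j))"
  using assms delta_Q_Q_Suc[of i ps j] delta_Q_R[of i ps j] delta_R_Q[of i ps j]
  by (auto intro!: run.intros)

lemma run_cycle_close:
  assumes "i < length ps" "1 \<le> j" "j + n + 1 = ps ! i" "w \<in> lpow {[b, a], [a]} n @@ {[a]}"
  shows "run ps (Q i j) w (Q i 0)"
  using assms(2-4)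
proof (induction n arbitrary: j w)
  case 0
  then show ?case
    using delta_Q_Q_0[OF assms(1)] by (auto simp: Nil_conc intro: run_single)
next
  case (Suc n)
  then obtain x y where w: "w = x @ y" and x: "x \<in> {[b, a], [a]}"
    and y: "y \<in> lpow {[b, a], [a]} n @@ {[a]}"
    by (auto simp: conc_assoc conc_iff)
  have "run ps (Q i j) x (Q i (Suc j))"
    using run_cycle_step[OF assms(1) Suc.prems(1) _ x] Suc.prems(2) by simp
  moreover have "run ps (Q i (Suc j)) y (Q i 0)"
    using Suc.IH[of "Suc j" y] Suc.prems(2) y by simp
  ultimately show ?case
    unfolding w by (rule run_append)
qed

lemma beta_run_loop:
  assumes "i < length ps" "ps ! i \<ge> 3" "w \<in> beta (ps ! i)"
  shows "run ps (Q i 0) w (Q i 0)"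
  using assms(3) unfolding beta_def'
proof (rule lstar_run_loop)
  fix u assume "u \<in> {[a]} @@ lpow {[b, a], [a]} (ps ! i - 2) @@ {[a]}"
  then obtain v where "u = a # v" "v \<in> lpow {[b, a], [a]} (ps ! i - 2) @@ {[a]}"
    by (auto simp: singleton_conc)
  moreover have "run ps (Q i 1) v (Q i 0)"
    using run_cycle_close[OF assms(1), of 1 "ps ! i - 2"] assms(2) calculation(2) by simp
  ultimately show "run ps (Q i 0) u (Q i 0)"
    using delta_Q_Q_Suc[OF assms(1), of 0] assms(2) by (auto intro: run.intros)
qed

lemma alpha_subset_nfa_lang:
  assumes "\<forall>i<length ps. ps ! i \<ge> 3"
  shows "alpha ps \<subseteq> nfa_lang ps"
proof
  fix w assume "w \<in> alpha ps"
  then have "run ps Qhat w Qhat"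
    unfolding alpha_def
  proof (rule lstar_run_loop)
    fix u assume "u \<in> {[a]} @@ (\<Union>i<length ps. beta (ps ! i)) @@ {[b]}"
    then obtain i v where u: "u = a # v @ [b]" and i: "i < length ps" and v: "v \<in> beta (ps ! i)"
      by (auto simp: singleton_conc conc_iff)
    have "run ps (Q i 0) (v @ [b]) Qhat"
      using beta_run_loop[OF i _ v] assms i delta_Q_Qhat run_single run_append by blast
    then show "run ps Qhat u Qhat"
      using u delta_Qhat_Q[OF i] by (auto intro: run.intros)
  qed
  then show "w \<in> nfa_lang ps"
    by (simp add: nfa_lang_def)
qed

definition exit_lang :: "nat list \<Rightarrow> nat \<Rightarrow> lang" where
  "exit_lang ps i = beta (ps ! i) @@ {[b]} @@ alpha ps"

definition cycle_lang :: "nat list \<Rightarrow> nat \<Rightarrow> nat \<Rightarrow> lang" where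
  "cycle_lang ps i j = lpow {[b, a], [a]} (ps ! i - 1 - j) @@ {[a]} @@ exit_lang ps i"

text \<open>The words leading from a state to \<open>Qhat\<close>; \<open>cycle_lang ps i j\<close> is meant for \<open>j \<ge> 1\<close>.\<close>

fun residual :: "nat list \<Rightarrow> state \<Rightarrow> lang" where
  "residual ps Qhat = alpha ps"
| "residual ps (Q i j) = (if j = 0 then exit_lang ps i else cycle_lang ps i j)"
| "residual ps (R i j) = {[a]} @@ cycle_lang ps i (Suc j)"

lemma exit_lang_enter:
  assumes "i < length ps" "w \<in> exit_lang ps i"
  shows "a # w \<in> alpha ps"
proof -
  obtain u v where "w = u @ [b] @ v" "u \<in> beta (ps ! i)" "v \<in> alpha ps"
    using assms(2) by (auto simp: exit_lang_def conc_iff)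
  moreover have "a # u @ [b] \<in> {[a]} @@ (\<Union>i<length ps. beta (ps ! i)) @@ {[b]}"
    using assms(1) calculation(2) by (auto simp: singleton_conc intro: concI)
  ultimately show ?thesis
    unfolding alpha_def using lstar_append[of "a # u @ [b]" _ v] by simp
qed

lemma exit_lang_leave: "w \<in> alpha ps \<Longrightarrow> b # w \<in> exit_lang ps i"
  using concI[OF lstar_Nil concI[of "[b]" "{[b]}" w]]
  by (simp add: exit_lang_def beta_def)

text \<open>Entering the cycle at \<open>q\<^sub>i\<^sub>,\<^sub>1\<close> starts a new block of \<open>\<beta>\<^sub>\<pi>\<^sub>i\<close>, which ends at the
  first return to \<open>q\<^sub>i\<^sub>,\<^sub>0\<close>.\<close>

lemma cycle_lang_start:
  assumes "ps ! i \<ge> 3" "w \<in> cycle_lang ps i 1"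
  shows "a # w \<in> exit_lang ps i"
proof -
  obtain u v x where w: "w = u @ [a] @ v @ [b] @ x" and u: "u \<in> lpow {[b, a], [a]} (ps ! i - 2)"
    and v: "v \<in> beta (ps ! i)" and x: "x \<in> alpha ps"
    using assms(2) by (auto simp: cycle_lang_def exit_lang_def conc_iff diff_diff_add numeral_2_eq_2)
  have "a # u @ [a] \<in> {[a]} @@ lpow {[b, a], [a]} (ps ! i - 2) @@ {[a]}"
    using u by (auto simp: singleton_conc intro: concI)
  then have "(a # u @ [a]) @ v \<in> beta (ps ! i)"
    using v unfolding beta_def' by (rule lstar_append)
  then have "((a # u @ [a]) @ v) @ [b] @ x \<in> exit_lang ps i"
    unfolding exit_lang_def by (rule concI[OF _ concI[OF _ x]]) simp
  then show ?thesis
    using w by simp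
qed

lemma cycle_lang_step:
  assumes "1 \<le> j" "Suc j < ps ! i" "x \<in> {[b, a], [a]}" "w \<in> cycle_lang ps i (Suc j)"
  shows "x @ w \<in> cycle_lang ps i j"
proof -
  have "ps ! i - 1 - j = Suc (ps ! i - 1 - Suc j)"
    using assms(2) by simp
  then show ?thesis
    using concI[OF assms(3) assms(4)[unfolded cycle_lang_def]]
    by (simp add: cycle_lang_def conc_assoc)
qed

lemma cycle_lang_last: "ps ! i = Suc j \<Longrightarrow> w \<in> exit_lang ps i \<Longrightarrow> a # w \<in> cycle_lang ps i j"
  by (simp add: cycle_lang_def Nil_conc singleton_conc)

lemma residual_delta:
  assumes "\<forall>i<length ps. ps ! i \<ge> 3" "delta ps q c q'" "w \<in> residual ps q'"
  shows "c # w \<in> residual ps q"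
  using assms(2) unfolding delta_def
proof (elim disjE exE conjE)
  fix i assume "i < length ps" "q = Qhat" "c = a" "q' = Q i 0"
  then show ?thesis
    using assms(3) exit_lang_enter by simp
next
  fix i j assume i: "i < length ps" and "j < ps ! i" "q = Q i j" "c = a"
    and q': "q' = Q i (Suc j mod ps ! i)"
  moreover have "ps ! i \<ge> 3"
    using assms(1) i by simp
  ultimately consider "j = 0" | "1 \<le> j" "Suc j < ps ! i" | "ps ! i = Suc j" "j \<noteq> 0"
    by linarith
  then show ?thesis
  proof cases
    case 1
    then show ?thesis
      using assms(3) q' \<open>ps ! i \<ge> 3\<close> \<open>q = Q i j\<close> \<open>c = a\<close> cycle_lang_start by simp
  next
    case 2
    then show ?thesis
      using assms(3) q' \<open>q = Q i j\<close> \<open>c = a\<close> cycle_lang_step[of j ps i "[a]"] by simp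
  next
    case 3
    then show ?thesis
      using assms(3) q' \<open>q = Q i j\<close> \<open>c = a\<close> cycle_lang_last by simp
  qed
next
  fix i j assume "1 \<le> j" "j \<le> ps ! i - 2" "q = Q i j" "c = b" "q' = R i j"
  moreover obtain v where "w = a # v" "v \<in> cycle_lang ps i (Suc j)"
    using assms(3) calculation(5) by (auto simp: singleton_conc)
  moreover have "Suc j < ps ! i"
    using calculation(1,2) by linarith
  ultimately show ?thesis
    using cycle_lang_step[of j ps i "[b, a]"] by simp
next
  fix i j assume "q = R i j" "c = a" "q' = Q i (Suc j)"
  then show ?thesis
    using assms(3) by (simp add: singleton_conc)
next
  fix i assume "q = Q i 0" "c = b" "q' = Qhat"
  then show ?thesis
    using assms(3) exit_lang_leave by simp
qed

lemma run_to_Qhat_residual: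
  assumes "\<forall>i<length ps. ps ! i \<ge> 3"
  shows "run ps q w Qhat \<Longrightarrow> w \<in> residual ps q"
proof (induction q w "Qhat" rule: run.induct)
  case run_nil
  then show ?case
    by (simp add: alpha_def lstar_Nil)
next
  case (run_cons q c q' w)
  then show ?case
    using residual_delta[OF assms] by blast
qed

theorem lemma5:
  fixes ps :: "nat list"
  assumes "length ps \<ge> 1"
    and "\<forall>i<length ps. ps ! i \<ge> 3"
    and "\<forall>i<length ps. \<forall>j<length ps. i \<noteq> j \<longrightarrow> coprime (ps ! i) (ps ! j)"
    and "ps ! 0 = 3"
  shows "nfa_lang ps = alpha ps"
proof
  show "nfa_lang ps \<subseteq> alpha ps"
    using run_to_Qhat_residual[OF assms(2), of Qhat] by (auto simp: nfa_lang_def)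
  show "alpha ps \<subseteq> nfa_lang ps"
    using alpha_subset_nfa_lang[OF assms(2)] .
qed

end
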